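(* Let $p$ be a prime with $p\equiv1\pmod 3$, $f=\frac{p-1}{3}$, $G\cong C_p$ with generator $a$, and $l$ a primitive root modulo $p$. For $i\in\{1,2,3\}$ let $X_i=\{a^{l^{3j+(i-1)}}:j=0,\dots,f-1\}$, and for $i,j,k\in\{1,2,3\}$ let $c_{ij}^k$ be the number of pairs $(x,y)\in X_i\times X_j$ with $xy=z$, for a fixed $z\in X_k$ (this number does not depend on $z$). For $i\in\{1,2\}$ let $T_i=\{c_{11}^1+2(i-1),c_{11}^2,c_{11}^3\}$. Then $|T_i|\in\{2,3\}$, and $|T_i|=2$ if and only if $p=t^2+3i^2$ for some integer $t$. *)

theory Defs
  imports "HOL-Algebra.Group" "HOL-Number_Theory.Residue_Primitive_Roots"
begin

definition cyc_class :: "('g, 'b) monoid_scheme \<Rightarrow> 'g \<Rightarrow> nat \<Rightarrow> nat \<Rightarrow> nat \<Rightarrow> 'g set" where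
  "cyc_class G a l p i = {a [^]\<^bsub>G\<^esub> (l ^ (3 * j + (i - 1))) | j. j < (p - 1) div 3}"

definition cyc_count :: "('g, 'b) monoid_scheme \<Rightarrow> 'g \<Rightarrow> nat \<Rightarrow> nat \<Rightarrow> nat \<Rightarrow> nat \<Rightarrow> 'g \<Rightarrow> nat" where
  "cyc_count G a l p i j z =
     card {(x, y). x \<in> cyc_class G a l p i \<and> y \<in> cyc_class G a l p j \<and> x \<otimes>\<^bsub>G\<^esub> y = z}"

end

theory Submission
  imports Defs "HOL-Algebra.Multiplicative_Group"
begin

text \<open>
  Sending \<open>n\<close> to \<open>a\<^sup>n\<close> identifies \<open>G\<close> with \<open>\<int>/p\<close>, the classes \<open>X\<^sub>1, X\<^sub>2, X\<^sub>3\<close>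
  with the cosets \<open>C\<^sub>0, C\<^sub>1, C\<^sub>2\<close> of the cubes in \<open>(\<int>/p)\<^sup>*\<close>, and \<open>c\<^sub>1\<^sub>1\<^sup>k\<close> with the
  cyclotomic number \<open>(1-k, 1-k)\<close> of order 3.  These nine numbers take only four values
  \<open>A = (0,0)\<close>, \<open>B = (0,1) = (2,2)\<close>, \<open>C = (0,2) = (1,1)\<close>, \<open>D = (1,2)\<close>, related by
  \<open>A + B + C + 1 = f = B + C + D\<close> and, counting the solutions of \<open>x + y + z = w\<close> with
  \<open>x, y \<in> C\<^sub>0\<close>, \<open>z \<in> C\<^sub>1\<close> for a fixed \<open>w \<in> C\<^sub>2\<close> once by the class of \<open>w - z\<close> and once by
  that of \<open>w - x\<close>, by \<open>AD + B\<^sup>2 + C\<^sup>2 = BC + CD + DB\<close>.  Hence \<open>4p = u\<^sup>2 + 3v\<^sup>2\<close> with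
  \<open>u = 9A - p + 8 \<equiv> 1\<close> and \<open>v = 3(B - C) \<equiv> 0 (mod 3)\<close>, and \<open>B \<noteq> C\<close>.  If \<open>p = t\<^sup>2 + 3s\<^sup>2\<close>,
  every such representation arises from \<open>t \<plusminus> s\<surd>-3\<close> by one of the six units of \<open>\<int>[\<omega>]\<close>,
  and the congruences on \<open>u\<close> and \<open>v\<close> pin down the unit.  So \<open>p = t\<^sup>2 + 3i\<^sup>2\<close> exactly when
  \<open>u \<mp> v = 16 - 12i\<close>, i.e. when \<open>A + 2(i - 1)\<close> equals \<open>B\<close> or \<open>C\<close>.
\<close>

lemma four_times_prime_neq_square:
  fixes P u :: int
  assumes "prime P"
  shows "4 * P \<noteq> u\<^sup>2"
proof
  assume sq: "4 * P = u\<^sup>2"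
  then have "even u" by (metis dvd_mult2 even_numeral even_power)
  then obtain w where "u = 2 * w" by blast
  with sq have "P = w\<^sup>2" by (simp add: power_mult_distrib)
  with assms show False by (simp add: prime_power_iff)
qed

lemma sq_plus_three_sq_eq_four_sqE:
  fixes X Y Q :: int
  assumes sum: "X\<^sup>2 + 3 * Y\<^sup>2 = 4 * Q\<^sup>2" and "Q dvd Y" and "Q \<noteq> 0"
  obtains e k where "e\<^sup>2 + 3 * k\<^sup>2 = 4" "X = Q * e" "Y = Q * k"
proof -
  obtain k where Y: "Y = Q * k" using \<open>Q dvd Y\<close> by (elim dvdE)
  with sum have X_sq: "X\<^sup>2 = Q\<^sup>2 * (4 - 3 * k\<^sup>2)" by (simp add: algebra_simps)
  then have "Q dvd X" by (metis dvd_triv_left pow_divides_pow_iff zero_less_numeral)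
  then obtain e where X: "X = Q * e" by (elim dvdE)
  with X_sq have "Q\<^sup>2 * (e\<^sup>2 + 3 * k\<^sup>2) = Q\<^sup>2 * 4" by (simp add: algebra_simps)
  with \<open>Q \<noteq> 0\<close> have "e\<^sup>2 + 3 * k\<^sup>2 = 4" by simp
  with X Y show ?thesis by (intro that)
qed

lemma sq_plus_three_sq_eq_four_cases:
  fixes e k :: int
  assumes "e\<^sup>2 + 3 * k\<^sup>2 = 4"
  shows "(e = 2 \<or> e = -2) \<and> k = 0 \<or> (e = 1 \<or> e = -1) \<and> (k = 1 \<or> k = -1)"
proof -
  have "0 \<le> e\<^sup>2" by simp
  with assms have "k\<^sup>2 < 2" by linarith
  then have "k\<^sup>2 \<le> 1\<^sup>2" by simp
  then have "\<bar>k\<bar> \<le> 1" using abs_le_square_iff[of k 1] by simp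
  then consider "k = 0" | "k = 1 \<or> k = -1" by linarith
  then show ?thesis
  proof cases
    case 1
    with assms have "e\<^sup>2 = 2\<^sup>2" by simp
    with 1 show ?thesis using power2_eq_iff[of e 2] by simp
  next
    case 2
    with assms have "e\<^sup>2 = 1" by auto
    with 2 show ?thesis by (simp add: power2_eq_1_iff)
  qed
qed

text \<open>In \<open>\<int>[\<omega>]\<close>: \<open>(u + v\<surd>-3)/2 = \<epsilon> (t + \<sigma>\<surd>-3)\<close> for a unit \<open>\<epsilon> = (e + k\<surd>-3)/2\<close>.\<close>

lemma norm_form_associate:
  fixes P t s u v :: int
  assumes "prime P" and P: "P = t\<^sup>2 + 3 * s\<^sup>2" and P4: "4 * P = u\<^sup>2 + 3 * v\<^sup>2"
  obtains \<sigma> e k where "\<sigma> = s \<or> \<sigma> = -s" "e\<^sup>2 + 3 * k\<^sup>2 = 4"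
    "u = e * t - 3 * k * \<sigma>" "v = e * \<sigma> + k * t"
proof -
  have t_sq: "t\<^sup>2 = P - 3 * s\<^sup>2" and u_sq: "u\<^sup>2 = 4 * P - 3 * v\<^sup>2" using P P4 by simp_all
  have "(t * v - s * u) * (t * v + s * u) = t\<^sup>2 * v\<^sup>2 - s\<^sup>2 * u\<^sup>2"
    by (simp add: power2_eq_square algebra_simps)
  also have "\<dots> = P * (v\<^sup>2 - 4 * s\<^sup>2)"
    unfolding t_sq u_sq by (simp add: algebra_simps)
  finally have "P dvd (t * v - s * u) * (t * v - (- s) * u)" by simp
  then have "P dvd t * v - s * u \<or> P dvd t * v - (- s) * u"
    using \<open>prime P\<close> by (simp only: prime_dvd_mult_iff)
  then obtain \<sigma> where \<sigma>: "\<sigma> = s \<or> \<sigma> = -s" and dvd: "P dvd t * v - \<sigma> * u" by blast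
  have P\<sigma>: "t\<^sup>2 + 3 * \<sigma>\<^sup>2 = P" using P \<sigma> by auto
  define X Y where "X = t * u + 3 * \<sigma> * v" and "Y = t * v - \<sigma> * u"
  have "X\<^sup>2 + 3 * Y\<^sup>2 = (t\<^sup>2 + 3 * \<sigma>\<^sup>2) * (u\<^sup>2 + 3 * v\<^sup>2)"
    unfolding X_def Y_def by (simp add: power2_eq_square algebra_simps)
  also have "\<dots> = 4 * P\<^sup>2" unfolding P\<sigma> P4[symmetric] by (simp add: power2_eq_square)
  finally have "X\<^sup>2 + 3 * Y\<^sup>2 = 4 * P\<^sup>2" .
  moreover have "P \<noteq> 0" using \<open>prime P\<close> by simp
  ultimately obtain e k where ek: "e\<^sup>2 + 3 * k\<^sup>2 = 4" "X = P * e" "Y = P * k"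
    using sq_plus_three_sq_eq_four_sqE dvd unfolding Y_def by metis
  have "P * u = t * X - 3 * \<sigma> * Y"
    unfolding X_def Y_def P\<sigma>[symmetric] by (simp add: power2_eq_square algebra_simps)
  also have "\<dots> = P * (e * t - 3 * k * \<sigma>)" using ek by (simp add: algebra_simps)
  finally have u: "u = e * t - 3 * k * \<sigma>" using \<open>P \<noteq> 0\<close> by simp
  have "P * v = \<sigma> * X + t * Y"
    unfolding X_def Y_def P\<sigma>[symmetric] by (simp add: power2_eq_square algebra_simps)
  also have "\<dots> = P * (e * \<sigma> + k * t)" using ek by (simp add: algebra_simps)
  finally have "v = e * \<sigma> + k * t" using \<open>P \<noteq> 0\<close> by simp
  with \<sigma> ek(1) u show ?thesis by (rule that)
qed

lemma prime_eq_sq_plus_three_sq_iff: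
  fixes P u v n :: int
  assumes "prime P" and P4: "4 * P = u\<^sup>2 + 3 * v\<^sup>2"
    and u: "[u = 1] (mod 3)" and v: "[v = 0] (mod 3)" and n: "[n = 1] (mod 3)"
  shows "(\<exists>t. P = t\<^sup>2 + 3 * n\<^sup>2) \<longleftrightarrow> u - v = 4 * n \<or> u + v = 4 * n"
proof
  assume "\<exists>t. P = t\<^sup>2 + 3 * n\<^sup>2"
  then obtain t where t: "P = t\<^sup>2 + 3 * n\<^sup>2" by blast
  obtain \<sigma> e k where \<sigma>: "\<sigma> = n \<or> \<sigma> = -n" and ek: "e\<^sup>2 + 3 * k\<^sup>2 = 4"
    and uv: "u = e * t - 3 * k * \<sigma>" "v = e * \<sigma> + k * t"
    by (rule norm_form_associate[OF \<open>prime P\<close> t P4])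
  have "k \<noteq> 0"
  proof
    assume "k = 0"
    with sq_plus_three_sq_eq_four_cases[OF ek] have "e = 2 \<or> e = -2" by simp
    with \<open>k = 0\<close> \<sigma> uv have "v = 2 * n \<or> v = - 2 * n" by auto
    with v n show False by (auto simp: cong_def) presburger+
  qed
  with sq_plus_three_sq_eq_four_cases[OF ek] have e: "e = 1 \<or> e = -1" and k: "k = 1 \<or> k = -1"
    by simp_all
  define c m where "c = e * k" and "m = - k * \<sigma>"
  have c: "c = 1 \<or> c = -1" and m: "m = n \<or> m = -n" using e k \<sigma> unfolding c_def m_def by auto
  have d: "u - c * v = 4 * m" using e k unfolding uv c_def m_def by (elim disjE) simp_all
  have "[4 * m = 1 - c * 0] (mod 3)"
    unfolding d[symmetric] using u v by (intro cong_diff cong_mult cong_refl)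
  then have "[m = 1] (mod 3)" by (simp add: cong_def) presburger
  with n have "m \<noteq> - n" by (auto simp: cong_def) presburger
  with m d c show "u - v = 4 * n \<or> u + v = 4 * n" by auto
next
  assume "u - v = 4 * n \<or> u + v = 4 * n"
  then have "P = (v + n)\<^sup>2 + 3 * n\<^sup>2 \<or> P = (v - n)\<^sup>2 + 3 * n\<^sup>2"
  proof
    assume "u - v = 4 * n"
    then have "u = v + 4 * n" by simp
    with P4 have "4 * P = 4 * ((v + n)\<^sup>2 + 3 * n\<^sup>2)" by (simp add: power2_eq_square algebra_simps)
    then show ?thesis by simp
  next
    assume "u + v = 4 * n"
    then have "u = 4 * n - v" by simp
    with P4 have "4 * P = 4 * ((v - n)\<^sup>2 + 3 * n\<^sup>2)" by (simp add: power2_eq_square algebra_simps)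
    then show ?thesis by simp
  qed
  then show "\<exists>t. P = t\<^sup>2 + 3 * n\<^sup>2" by blast
qed

lemma card_shifted_triple:
  fixes A B C i :: nat
  assumes "prime p" and p: "p = 3 * (A + B + C) + 4"
    and norm: "4 * int p = (9 * int A - int p + 8)\<^sup>2 + 27 * (int B - int C)\<^sup>2" and i: "i \<in> {1, 2}"
  shows "card {A + 2 * (i - 1), B, C} \<in> {2, 3} \<and>
    (card {A + 2 * (i - 1), B, C} = 2 \<longleftrightarrow> (\<exists>t::int. int p = t\<^sup>2 + 3 * (int i)\<^sup>2))"
proof -
  \<comment> \<open>\<open>n\<close> is the integer with \<open>n \<equiv> 1 (mod 3)\<close> and \<open>n\<^sup>2 = i\<^sup>2\<close>\<close>
  define u v n where "u = 9 * int A - int p + 8" and "v = 3 * (int B - int C)" and "n = 4 - 3 * int i"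
  have "v\<^sup>2 = 9 * (int B - int C)\<^sup>2" unfolding v_def by (simp only: power_mult_distrib) simp
  with norm have uv: "4 * int p = u\<^sup>2 + 3 * v\<^sup>2" unfolding u_def by simp
  have "prime (int p)" using \<open>prime p\<close> by simp
  have "B \<noteq> C"
  proof
    assume "B = C"
    with uv have "4 * int p = u\<^sup>2" by (simp add: v_def)
    with four_times_prime_neq_square[OF \<open>prime (int p)\<close>] show False by blast
  qed
  then have card: "card {A + 2 * (i - 1), B, C} = (if A + 2 * (i - 1) \<in> {B, C} then 2 else 3)"
    by (auto simp: card_insert_if)
  have shift: "A + 2 * (i - 1) \<in> {B, C} \<longleftrightarrow> u - v = 4 * n \<or> u + v = 4 * n"
    using p i unfolding u_def v_def n_def by auto
  have "[u = 1] (mod 3)" "[v = 0] (mod 3)" "[n = 1] (mod 3)"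
    using p unfolding u_def v_def n_def cong_def by presburger+
  with \<open>prime (int p)\<close> uv have "(\<exists>t. int p = t\<^sup>2 + 3 * n\<^sup>2) \<longleftrightarrow> u - v = 4 * n \<or> u + v = 4 * n"
    by (rule prime_eq_sq_plus_three_sq_iff)
  moreover have "n\<^sup>2 = (int i)\<^sup>2" using i unfolding n_def by auto
  ultimately show ?thesis using card shift by auto
qed

locale cubic_cyclotomy =
  fixes p l :: nat
  assumes prime_p: "prime p" and p_mod_3: "p mod 3 = 1" and primroot: "residue_primroot p l"
begin

definition f :: nat where "f = (p - 1) div 3"

lemma p_gt_1: "p > 1"
  using prime_p prime_gt_1_nat by blast

lemma p_eq: "p = 3 * f + 1"
  unfolding f_def using p_mod_3 p_gt_1 by presburger

lemma p_minus_1_eq: "p - 1 = 3 * f"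
  using p_eq by simp

lemma three_dvd_p_minus_1: "3 dvd p - 1"
  using p_minus_1_eq by simp

lemma pow_cong_iff: "[int l ^ a = int l ^ b] (mod int p) \<longleftrightarrow> [a = b] (mod (p - 1))"
proof -
  have "coprime p l" "ord p l = p - 1"
    using primroot prime_p by (simp_all add: residue_primroot_def totient_prime)
  then show ?thesis
    by (metis cong_int_iff of_nat_power order_divides_expdiff)
qed

text \<open>Residues modulo \<open>p\<close> are represented by integers: \<open>C r\<close> is the full preimage in \<open>\<int>\<close>
  of the coset \<open>l\<^sup>r\<langle>l\<^sup>3\<rangle>\<close> of \<open>(\<int>/p)\<^sup>*\<close>, so membership depends only on \<open>x mod p\<close> and
  \<open>r mod 3\<close>.\<close>

definition C :: "int \<Rightarrow> int set" where
  "C r = {x. \<exists>k. [x = int l ^ k] (mod int p) \<and> [int k = r] (mod 3)}"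

lemma C_cong: "x \<in> C r \<Longrightarrow> [x = y] (mod int p) \<Longrightarrow> y \<in> C r"
  unfolding C_def by (blast intro: cong_trans cong_sym)

lemma C_cong_index: "[r = s] (mod 3) \<Longrightarrow> C r = C s"
  unfolding C_def by (blast intro: cong_trans cong_sym)

lemma pow_in_C: "int l ^ k \<in> C (int k)"
  unfolding C_def by (blast intro: cong_refl)

lemma C_mult: "x \<in> C r \<Longrightarrow> y \<in> C s \<Longrightarrow> x * y \<in> C (r + s)"
proof -
  assume "x \<in> C r" "y \<in> C s"
  then obtain k k' where "[x = int l ^ k] (mod int p)" "[int k = r] (mod 3)"
    "[y = int l ^ k'] (mod int p)" "[int k' = s] (mod 3)"
    unfolding C_def by blast
  then have "[x * y = int l ^ (k + k')] (mod int p)" "[int (k + k') = r + s] (mod 3)"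
    by (auto simp: power_add intro: cong_mult cong_add)
  then show ?thesis unfolding C_def by blast
qed

lemma C_not_dvd: "x \<in> C r \<Longrightarrow> \<not> int p dvd x"
proof
  assume "x \<in> C r" "int p dvd x"
  then obtain k where "[x = int l ^ k] (mod int p)" unfolding C_def by blast
  with \<open>int p dvd x\<close> have "int p dvd int l ^ k" by (simp add: cong_dvd_iff)
  then have "p dvd l"
    using prime_p by (metis int_dvd_int_iff of_nat_power prime_dvd_power_nat)
  moreover have "coprime p l" using primroot by (simp add: residue_primroot_def)
  ultimately show False using p_gt_1 by (simp add: coprime_absorb_left)
qed

lemma C_coprime:
  assumes "x \<in> C r"
  shows "coprime x (int p)"
proof -
  have "coprime (int p) x" using C_not_dvd[OF assms] prime_p by (simp add: prime_imp_coprime)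
  then show ?thesis by (simp add: coprime_commute)
qed

lemma C_cancel: "t \<in> C s \<Longrightarrow> [t * x = t * y] (mod int p) \<Longrightarrow> [x = y] (mod int p)"
  using C_coprime cong_mult_lcancel by blast

lemma C_index_unique: "x \<in> C r \<Longrightarrow> x \<in> C s \<Longrightarrow> [r = s] (mod 3)"
proof -
  assume "x \<in> C r" "x \<in> C s"
  then obtain k k' where k: "[x = int l ^ k] (mod int p)" "[int k = r] (mod 3)"
    and k': "[x = int l ^ k'] (mod int p)" "[int k' = s] (mod 3)"
    unfolding C_def by blast
  from k(1) k'(1) have "[k = k'] (mod (p - 1))"
    by (metis cong_sym cong_trans pow_cong_iff)
  then have "[k = k'] (mod 3)"
    using three_dvd_p_minus_1 by (rule cong_dvd_modulus_nat)
  then have "[int k = int k'] (mod 3)" using cong_int_iff[of k k' 3] by simp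
  with k(2) k'(2) show ?thesis by (metis cong_sym cong_trans)
qed

lemma C_cover: "\<not> int p dvd x \<Longrightarrow> \<exists>r\<in>{0, 1, 2}. x \<in> C r"
proof -
  assume "\<not> int p dvd x"
  then have "x mod int p \<noteq> 0" by (simp add: dvd_eq_mod_eq_0)
  moreover have "0 \<le> x mod int p" "x mod int p < int p" using p_gt_1 by simp_all
  ultimately have "nat (x mod int p) \<in> totatives p"
    using prime_p by (auto simp: totatives_prime)
  then have "nat (x mod int p) \<in> (\<lambda>i. l ^ i mod p) ` {..<totient p}"
    using residue_primroot_is_generator[OF p_gt_1 primroot] by (simp add: bij_betw_def)
  then obtain k where "nat (x mod int p) = l ^ k mod p" by blast
  then have "x mod int p = int (l ^ k mod p)" using \<open>0 \<le> x mod int p\<close> by simp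
  then have "[int l ^ k = x] (mod int p)" by (simp add: cong_def of_nat_mod)
  with pow_in_C have "x \<in> C (int k)" by (rule C_cong)
  moreover have "C (int k) = C (int k mod 3)" by (rule C_cong_index) (simp add: cong_def)
  moreover have "int k mod 3 \<in> {0, 1, 2}" by auto
  ultimately show ?thesis by auto
qed

lemma one_in_C0: "1 \<in> C 0"
  using pow_in_C[of 0] by simp

lemma minus_one_in_C0: "-1 \<in> C 0"
proof -
  obtain r where "-1 \<in> C r"
    using C_cover[of "-1"] p_gt_1 by auto
  then have "(-1) * ((-1) * (-1)) \<in> C (r + (r + r))"
    by (intro C_mult)
  moreover have "C (r + (r + r)) = C 0"
    by (rule C_cong_index) (simp add: cong_def)
  ultimately show ?thesis by simp
qed

lemma C_uminus:
  assumes "x \<in> C r"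
  shows "- x \<in> C r"
proof -
  have "(-1) * x \<in> C (0 + r)" using minus_one_in_C0 assms by (rule C_mult)
  then show ?thesis by simp
qed

lemma C_inverse: "x \<in> C r \<Longrightarrow> [x * y = 1] (mod int p) \<Longrightarrow> y \<in> C (- r)"
proof -
  assume x: "x \<in> C r" and xy: "[x * y = 1] (mod int p)"
  have "\<not> int p dvd y"
  proof
    assume "int p dvd y"
    then have "int p dvd 1" using xy by (metis cong_dvd_iff dvd_mult)
    then show False using p_gt_1 by simp
  qed
  then obtain s where y: "y \<in> C s" using C_cover by blast
  have "1 \<in> C (r + s)" using C_mult[OF x y] xy by (rule C_cong)
  then have "[r + s = 0] (mod 3)" using one_in_C0 by (rule C_index_unique)
  then have "[s = - r] (mod 3)" by (simp add: cong_iff_dvd_diff add.commute)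
  with y show ?thesis using C_cong_index by blast
qed

lemma mem_C_iff_pow:
  assumes "r < 3"
  shows "x \<in> C (int r) \<longleftrightarrow> (\<exists>j<f. [x = int l ^ (3 * j + r)] (mod int p))"
proof
  assume "x \<in> C (int r)"
  then obtain k where k: "[x = int l ^ k] (mod int p)" "[int k = int r] (mod 3)"
    unfolding C_def by blast
  define m where "m = k mod (p - 1)"
  have "[k = m] (mod (p - 1))" unfolding m_def by (simp add: cong_def)
  with k(1) have x: "[x = int l ^ m] (mod int p)" by (metis cong_trans pow_cong_iff)
  have "[k = r] (mod 3)" using k(2) cong_int_iff[of k r 3] by simp
  then have "m mod 3 = r"
    using assms three_dvd_p_minus_1 unfolding m_def by (simp add: cong_def mod_mod_cancel)
  moreover have "m < 3 * f" unfolding m_def p_minus_1_eq[symmetric] using p_gt_1 by simp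
  ultimately have "m = 3 * (m div 3) + r" "m div 3 < f" by auto
  with x show "\<exists>j<f. [x = int l ^ (3 * j + r)] (mod int p)" by metis
next
  assume "\<exists>j<f. [x = int l ^ (3 * j + r)] (mod int p)"
  then obtain j where "[int l ^ (3 * j + r) = x] (mod int p)" by (auto intro: cong_sym)
  moreover have "C (int (3 * j + r)) = C (int r)" by (rule C_cong_index) (simp add: cong_def)
  ultimately show "x \<in> C (int r)" using pow_in_C C_cong by metis
qed

lemma card_C: "card (C r \<inter> {0..<int p}) = f"
proof -
  define r' where "r' = nat (r mod 3)"
  have "r' < 3" unfolding r'_def by simp
  have "C r = C (int r')" unfolding r'_def by (rule C_cong_index) (simp add: cong_def)
  define e where "e j = int l ^ (3 * j + r') mod int p" for j
  have "C r \<inter> {0..<int p} = e ` {..<f}"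
  proof
    show "C r \<inter> {0..<int p} \<subseteq> e ` {..<f}"
    proof
      fix x assume "x \<in> C r \<inter> {0..<int p}"
      then obtain j where "j < f" "[x = int l ^ (3 * j + r')] (mod int p)" "x \<in> {0..<int p}"
        using mem_C_iff_pow[OF \<open>r' < 3\<close>] \<open>C r = C (int r')\<close> by auto
      then show "x \<in> e ` {..<f}" unfolding e_def cong_def by (auto intro!: image_eqI[of _ _ j])
    qed
    show "e ` {..<f} \<subseteq> C r \<inter> {0..<int p}"
      using mem_C_iff_pow[OF \<open>r' < 3\<close>] \<open>C r = C (int r')\<close> p_gt_1 unfolding e_def by (auto simp: cong_def)
  qed
  moreover have "inj_on e {..<f}"
  proof
    fix i j assume "i \<in> {..<f}" "j \<in> {..<f}" "e i = e j"
    then have "[3 * i + r' = 3 * j + r'] (mod (p - 1))"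
      unfolding e_def by (simp add: cong_def[symmetric] pow_cong_iff)
    moreover have "3 * i + r' < p - 1" "3 * j + r' < p - 1"
      using \<open>i \<in> {..<f}\<close> \<open>j \<in> {..<f}\<close> \<open>r' < 3\<close> p_eq by auto
    ultimately show "i = j" using cong_less_modulus_unique_nat by fastforce
  qed
  ultimately show ?thesis by (simp add: card_image)
qed

definition rep_set :: "int \<Rightarrow> int \<Rightarrow> int \<Rightarrow> int set" where
  "rep_set w i j = {x \<in> {0..<int p}. x \<in> C i \<and> w - x \<in> C j}"

definition reps :: "int \<Rightarrow> int \<Rightarrow> int \<Rightarrow> nat" where
  "reps w i j = card (rep_set w i j)"

text \<open>Since \<open>-1 \<in> C 0\<close>, this is the classical cyclotomic number
  \<open>(i,j) = #{x \<in> C\<^sub>i. x + 1 \<in> C\<^sub>j}\<close>.\<close>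

definition cyc :: "int \<Rightarrow> int \<Rightarrow> nat" where
  "cyc i j = reps 1 i j"

lemma finite_rep_set: "finite (rep_set w i j)"
  by (rule finite_subset[of _ "{0..<int p}"]) (auto simp: rep_set_def)

lemma reps_cong:
  assumes "[w = w'] (mod int p)"
  shows "reps w i j = reps w' i j"
proof -
  have "w - x \<in> C j \<longleftrightarrow> w' - x \<in> C j" for x
    using assms C_cong cong_diff[OF _ cong_refl] cong_sym by metis
  then show ?thesis unfolding reps_def rep_set_def by simp
qed

lemma reps_index_mod: "reps w (i mod 3) (j mod 3) = reps w i j"
  unfolding reps_def rep_set_def using C_cong_index[of "i mod 3" i] C_cong_index[of "j mod 3" j]
  by (simp add: cong_def)

lemma reps_le_via_map:
  assumes maps: "\<And>x. x \<in> C i \<Longrightarrow> w - x \<in> C j \<Longrightarrow> \<phi> x \<in> C i' \<and> w' - \<phi> x \<in> C j'"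
    and inj: "\<And>x y. x \<in> C i \<Longrightarrow> y \<in> C i \<Longrightarrow> [\<phi> x = \<phi> y] (mod int p) \<Longrightarrow> [x = y] (mod int p)"
  shows "reps w i j \<le> reps w' i' j'"
proof -
  let ?h = "\<lambda>x. \<phi> x mod int p"
  let ?A = "rep_set w i j" and ?B = "rep_set w' i' j'"
  have "inj_on ?h ?A"
  proof (rule inj_onI)
    fix x y assume x: "x \<in> ?A" and y: "y \<in> ?A" and "?h x = ?h y"
    then have "[\<phi> x = \<phi> y] (mod int p)" by (simp add: cong_def)
    with x y inj have "x mod int p = y mod int p" unfolding cong_def rep_set_def by blast
    with x y show "x = y" by (simp add: rep_set_def)
  qed
  moreover have "?h ` ?A \<subseteq> ?B"
  proof
    fix y assume "y \<in> ?h ` ?A"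
    then obtain x where "x \<in> C i" "w - x \<in> C j" and y: "y = ?h x" by (auto simp: rep_set_def)
    with maps have "\<phi> x \<in> C i'" "w' - \<phi> x \<in> C j'" by auto
    moreover have "[\<phi> x = y] (mod int p)" "[w' - \<phi> x = w' - y] (mod int p)"
      unfolding y by (simp_all add: cong_def mod_diff_right_eq)
    ultimately have "y \<in> C i'" "w' - y \<in> C j'" by (auto intro: C_cong)
    moreover have "y \<in> {0..<int p}" unfolding y using p_gt_1 by simp
    ultimately show "y \<in> ?B" by (simp add: rep_set_def)
  qed
  ultimately show ?thesis unfolding reps_def using finite_rep_set by (rule card_inj_on_le)
qed

lemma reps_scale_le:
  assumes "t \<in> C s"
  shows "reps w i j \<le> reps (t * w) (s + i) (s + j)"
proof (rule reps_le_via_map[where \<phi> = "\<lambda>x. t * x"])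
  fix x assume "x \<in> C i" "w - x \<in> C j"
  with assms have "t * x \<in> C (s + i)" "t * (w - x) \<in> C (s + j)" by (simp_all add: C_mult)
  then show "t * x \<in> C (s + i) \<and> t * w - t * x \<in> C (s + j)" by (simp add: right_diff_distrib)
qed (use assms C_cancel in blast)

lemma reps_scale:
  assumes "t \<in> C s"
  shows "reps (t * w) (s + i) (s + j) = reps w i j"
proof (rule antisym)
  obtain t' where t': "[t * t' = 1] (mod int p)"
    using cong_solve_coprime_int[OF C_coprime[OF assms]] by blast
  then have "t' \<in> C (- s)" using assms by (rule C_inverse[rotated])
  then have "reps (t * w) (s + i) (s + j) \<le> reps (t' * (t * w)) (- s + (s + i)) (- s + (s + j))"
    by (rule reps_scale_le)
  also have "\<dots> = reps w i j"
  proof -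
    have "[t' * (t * w) = 1 * w] (mod int p)"
      using t' by (metis cong_scalar_right mult.assoc mult.commute)
    then show ?thesis by (simp add: reps_cong)
  qed
  finally show "reps (t * w) (s + i) (s + j) \<le> reps w i j" .
qed (rule reps_scale_le[OF assms])

lemma reps_eq_cyc:
  assumes "w \<in> C k"
  shows "reps w i j = cyc ((i - k) mod 3) ((j - k) mod 3)"
  using reps_scale[OF assms, of 1 "i - k" "j - k"] by (simp add: cyc_def reps_index_mod)

lemma reps_commute: "reps w i j = reps w j i"
proof -
  have "reps w i j \<le> reps w j i" for i j
    by (rule reps_le_via_map[where \<phi> = "\<lambda>x. w - x"]) (auto simp: cong_iff_dvd_diff dvd_diff_commute)
  then show ?thesis by (simp add: antisym)
qed

lemma cyc_commute: "cyc i j = cyc j i"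
  unfolding cyc_def by (rule reps_commute)

lemma C_mult_pow_p_minus_2:
  assumes "x \<in> C r"
  shows "[x * x ^ (p - 2) = 1] (mod int p)"
proof -
  obtain k where k: "[x = int l ^ k] (mod int p)" using assms unfolding C_def by blast
  have "x * x ^ (p - 2) = x ^ (p - 1)"
    using p_gt_1 by (simp add: power_Suc[symmetric] Suc_diff_Suc numeral_2_eq_2)
  also have "[\<dots> = int l ^ (k * (p - 1))] (mod int p)"
    using k by (simp add: cong_pow power_mult)
  also have "[int l ^ (k * (p - 1)) = int l ^ 0] (mod int p)"
    unfolding pow_cong_iff by (simp add: cong_def)
  finally show ?thesis by simp
qed

lemma cyc_inverse_le: "cyc i j \<le> cyc (- i) (j - i)"
  unfolding cyc_def
proof (rule reps_le_via_map[where \<phi> = "\<lambda>x. x ^ (p - 2)"])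
  fix x assume x: "x \<in> C i" and "1 - x \<in> C j"
  have inv: "[x * x ^ (p - 2) = 1] (mod int p)" using x by (rule C_mult_pow_p_minus_2)
  then have xi: "x ^ (p - 2) \<in> C (- i)" using x by (rule C_inverse[rotated])
  have "- (1 - x) * x ^ (p - 2) \<in> C (j + - i)"
    using C_uminus[OF \<open>1 - x \<in> C j\<close>] xi by (rule C_mult)
  moreover have "[- (1 - x) * x ^ (p - 2) = 1 - x ^ (p - 2)] (mod int p)"
  proof -
    have "- (1 - x) * x ^ (p - 2) = x * x ^ (p - 2) - x ^ (p - 2)" by (simp add: algebra_simps)
    also have "[\<dots> = 1 - x ^ (p - 2)] (mod int p)" using inv by (intro cong_diff cong_refl)
    finally show ?thesis .
  qed
  ultimately have "1 - x ^ (p - 2) \<in> C (j - i)" by (auto intro: C_cong)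
  with xi show "x ^ (p - 2) \<in> C (- i) \<and> 1 - x ^ (p - 2) \<in> C (j - i)" by simp
next
  fix x y assume x: "x \<in> C i" and y: "y \<in> C i" and "[x ^ (p - 2) = y ^ (p - 2)] (mod int p)"
  then have "[y * (x * x ^ (p - 2)) = x * (y * y ^ (p - 2))] (mod int p)"
    by (metis cong_scalar_left mult.left_commute)
  then show "[x = y] (mod int p)"
    using C_mult_pow_p_minus_2[OF x] C_mult_pow_p_minus_2[OF y]
    by (metis cong_scalar_left cong_sym cong_trans mult.right_neutral)
qed

lemma cyc_inverse: "cyc i j = cyc ((- i) mod 3) ((j - i) mod 3)"
proof (rule antisym)
  show "cyc i j \<le> cyc ((- i) mod 3) ((j - i) mod 3)"
    using cyc_inverse_le[of i j] by (simp add: cyc_def reps_index_mod)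
  show "cyc ((- i) mod 3) ((j - i) mod 3) \<le> cyc i j"
    using cyc_inverse_le[of "- i" "j - i"] by (simp add: cyc_def reps_index_mod)
qed

lemma rep_sets_disjoint:
  assumes "k \<in> {0, 1, 2}" "k' \<in> {0, 1, 2}" "k \<noteq> k'"
  shows "rep_set w i k \<inter> rep_set w i k' = {}"
  using assms C_index_unique unfolding rep_set_def by (fastforce simp: cong_def)

lemma rep_sets_partition:
  "(\<Union>k\<in>{0, 1, 2}. rep_set w i k) = {x \<in> C i \<inter> {0..<int p}. \<not> [x = w] (mod int p)}"
proof (intro equalityI subsetI)
  fix x assume "x \<in> (\<Union>k\<in>{0, 1, 2}. rep_set w i k)"
  then obtain k where "x \<in> C i" "x \<in> {0..<int p}" "w - x \<in> C k" by (auto simp: rep_set_def)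
  then have "\<not> [x = w] (mod int p)"
    using C_not_dvd by (auto simp: cong_iff_dvd_diff dvd_diff_commute)
  with \<open>x \<in> C i\<close> \<open>x \<in> {0..<int p}\<close> show "x \<in> {x \<in> C i \<inter> {0..<int p}. \<not> [x = w] (mod int p)}"
    by simp
next
  fix x assume "x \<in> {x \<in> C i \<inter> {0..<int p}. \<not> [x = w] (mod int p)}"
  then have "x \<in> C i" "x \<in> {0..<int p}" "\<not> int p dvd w - x"
    by (auto simp: cong_iff_dvd_diff dvd_diff_commute)
  then show "x \<in> (\<Union>k\<in>{0, 1, 2}. rep_set w i k)"
    using C_cover by (auto simp: rep_set_def)
qed

lemma reps_row_sum: "reps w i 0 + reps w i 1 + reps w i 2 + (if w \<in> C i then 1 else 0) = f"
proof -
  have "reps w i 0 + reps w i 1 + reps w i 2 = card (\<Union>k\<in>{0, 1, 2}. rep_set w i k)"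
    by (subst card_UN_disjoint) (simp_all add: reps_def finite_rep_set rep_sets_disjoint)
  also have "\<dots> = card (C i \<inter> {0..<int p} - {w mod int p})"
    unfolding rep_sets_partition by (rule arg_cong[where f = card]) (auto simp: cong_def)
  also have "\<dots> = f - (if w \<in> C i then 1 else 0)"
    using card_C[of i] C_cong[of w i "w mod int p"] C_cong[of "w mod int p" i w] p_gt_1
    by (simp add: card_Diff_singleton_if cong_def)
  finally show ?thesis using p_eq p_gt_1 by auto
qed

definition triples :: "int \<Rightarrow> int \<Rightarrow> int \<Rightarrow> int \<Rightarrow> (int \<times> int \<times> int) set" where
  "triples w a b c = {(x, y, z). x \<in> C a \<and> y \<in> C b \<and> z \<in> C c \<and>
     x \<in> {0..<int p} \<and> y \<in> {0..<int p} \<and> z \<in> {0..<int p} \<and> [x + y + z = w] (mod int p)}"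

lemma card_triples_rotate: "card (triples w a b c) = card (triples w b c a)"
proof -
  have "bij_betw (\<lambda>(x, y, z). (y, z, x)) (triples w a b c) (triples w b c a)"
    by (rule bij_betw_byWitness[where f' = "\<lambda>(y, z, x). (x, y, z)"]) (auto simp: triples_def ac_simps)
  then show ?thesis by (rule bij_betw_same_card)
qed

lemma card_triples_eq_sum: "card (triples w a b c) = (\<Sum>z \<in> C c \<inter> {0..<int p}. reps (w - z) a b)"
proof -
  have middle: "(w - z - x) mod int p = y" if "(x, y, z) \<in> triples w a b c" for x y z
  proof -
    from that have "[y = w - z - x] (mod int p)" "y \<in> {0..<int p}"
      by (auto simp: triples_def cong_iff_dvd_diff algebra_simps)
    then show ?thesis by (simp add: cong_def)
  qed
  have "bij_betw (\<lambda>(x, y, z). (z, x)) (triples w a b c) (SIGMA z : C c \<inter> {0..<int p}. rep_set (w - z) a b)"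
  proof (rule bij_betw_byWitness[where f' = "\<lambda>(z, x). (x, (w - z - x) mod int p, z)"])
    show "(\<lambda>(x, y, z). (z, x)) ` triples w a b c \<subseteq> (SIGMA z : C c \<inter> {0..<int p}. rep_set (w - z) a b)"
      using middle by (force simp: triples_def rep_set_def intro: C_cong)
    have "[x + (w - z - x) mod int p + z = x + (w - z - x) + z] (mod int p)" for x z
      by (intro cong_add cong_refl) (simp add: cong_def)
    moreover have "(w - z - x) mod int p \<in> C b" if "w - z - x \<in> C b" for x z
      using that by (rule C_cong) (simp add: cong_def)
    ultimately show "(\<lambda>(z, x). (x, (w - z - x) mod int p, z)) ` (SIGMA z : C c \<inter> {0..<int p}. rep_set (w - z) a b)
        \<subseteq> triples w a b c"
      using p_gt_1 by (auto simp: triples_def rep_set_def)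
  qed (use middle in auto)
  then have "card (triples w a b c) = card (SIGMA z : C c \<inter> {0..<int p}. rep_set (w - z) a b)"
    by (rule bij_betw_same_card)
  also have "\<dots> = (\<Sum>z \<in> C c \<inter> {0..<int p}. reps (w - z) a b)"
    by (simp add: reps_def finite_rep_set)
  finally show ?thesis .
qed

lemma card_triples_eq_cyc_sum:
  assumes "w \<notin> C c"
  shows "card (triples w a b c) = (\<Sum>k\<in>{0, 1, 2}. reps w c k * cyc ((a - k) mod 3) ((b - k) mod 3))"
proof -
  have "C c \<inter> {0..<int p} = (\<Union>k\<in>{0, 1, 2}. rep_set w c k)"
    unfolding rep_sets_partition using assms C_cong cong_sym by blast
  then have "card (triples w a b c) = (\<Sum>z \<in> (\<Union>k\<in>{0, 1, 2}. rep_set w c k). reps (w - z) a b)"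
    by (simp only: card_triples_eq_sum)
  also have "\<dots> = (\<Sum>k\<in>{0, 1, 2}. \<Sum>z \<in> rep_set w c k. reps (w - z) a b)"
    by (rule sum.UNION_disjoint) (simp_all add: finite_rep_set rep_sets_disjoint)
  also have "\<dots> = (\<Sum>k\<in>{0, 1, 2}. \<Sum>z \<in> rep_set w c k. cyc ((a - k) mod 3) ((b - k) mod 3))"
    by (intro sum.cong refl) (simp add: rep_set_def reps_eq_cyc)
  finally show ?thesis by (simp add: reps_def)
qed

lemma cyc_quadratic_relation:
  "cyc 2 1 * cyc 0 0 + cyc 2 2 * cyc 2 2 + cyc 2 0 * cyc 1 1
     = cyc 1 1 * cyc 0 1 + cyc 1 2 * cyc 2 0 + cyc 1 0 * cyc 1 2"
proof -
  define w where "w = int l ^ 2"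
  have w: "w \<in> C 2" using pow_in_C[of 2] unfolding w_def by simp
  then have "w \<notin> C 0" "w \<notin> C 1" using C_index_unique by (fastforce simp: cong_def)+
  have "card (triples w 0 0 1) = card (triples w 0 1 0)" by (rule card_triples_rotate)
  then show ?thesis
    unfolding card_triples_eq_cyc_sum[OF \<open>w \<notin> C 1\<close>] card_triples_eq_cyc_sum[OF \<open>w \<notin> C 0\<close>]
    by (simp add: reps_eq_cyc[OF w])
qed

lemma cyc_symmetries:
  "cyc 1 0 = cyc 0 1" "cyc 2 2 = cyc 0 1" "cyc 2 0 = cyc 0 2" "cyc 1 1 = cyc 0 2" "cyc 2 1 = cyc 1 2"
  using cyc_commute cyc_inverse[of 1 0] cyc_inverse[of 2 0] by simp_all

lemma cyc_row_sums: "cyc 0 0 + cyc 0 1 + cyc 0 2 + 1 = f" "cyc 1 0 + cyc 1 1 + cyc 1 2 = f"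
proof -
  have "1 \<notin> C 1" using one_in_C0 C_index_unique by (fastforce simp: cong_def)
  then show "cyc 0 0 + cyc 0 1 + cyc 0 2 + 1 = f" "cyc 1 0 + cyc 1 1 + cyc 1 2 = f"
    using reps_row_sum[of 1 0] reps_row_sum[of 1 1] one_in_C0 by (simp_all add: cyc_def)
qed

lemma cyc_diagonal_sum: "p = 3 * (cyc 0 0 + cyc 2 2 + cyc 1 1) + 4"
  using cyc_row_sums(1) cyc_symmetries p_eq by simp

lemma cyc_norm_form:
  "4 * int p = (9 * int (cyc 0 0) - int p + 8)\<^sup>2 + 27 * (int (cyc 2 2) - int (cyc 1 1))\<^sup>2"
proof -
  define A B C D where "A = int (cyc 0 0)" "B = int (cyc 0 1)" "C = int (cyc 0 2)" "D = int (cyc 1 2)"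
  have D: "D = A + 1" using cyc_row_sums cyc_symmetries unfolding A_B_C_D_def by simp
  have p: "int p = 3 * (A + B + C) + 4" using cyc_diagonal_sum cyc_symmetries unfolding A_B_C_D_def by simp
  have "D * A + B * B + C * C = C * B + D * C + B * D"
    using arg_cong[OF cyc_quadratic_relation, of int] cyc_symmetries unfolding A_B_C_D_def by simp
  then have "(9 * A - int p + 8)\<^sup>2 + 27 * (B - C)\<^sup>2 = 4 * int p"
    unfolding p D by (simp add: power2_eq_square algebra_simps)
  then show ?thesis using cyc_symmetries unfolding A_B_C_D_def by simp
qed

end

locale cubic_cyclotomy_group = cubic_cyclotomy p l + group G
  for p l :: nat and G (structure) +
  fixes a
  assumes generator: "a \<in> carrier G" and generated: "carrier G = {a [^] (n::nat) | n. True}"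
    and order: "card (carrier G) = p"
begin

lemma ord_generator: "ord a = p"
proof -
  have "ord a dvd p" using ord_dvd_group_order[OF generator] order by (simp add: order_def)
  moreover have "ord a \<noteq> 1"
  proof
    assume "ord a = 1"
    then have "carrier G = {\<one>}" using generated ord_eq_1[OF generator] by auto
    with order p_gt_1 show False by simp
  qed
  ultimately show ?thesis using prime_p by (auto simp: prime_nat_iff)
qed

lemma int_pow_generator_eq_iff: "a [^] (x::int) = a [^] (y::int) \<longleftrightarrow> [x = y] (mod int p)"
  using int_pow_eq[OF generator] ord_generator by (simp add: cong_iff_dvd_diff dvd_diff_commute)

lemma cyc_class_eq_image:
  assumes "r < 3"
  shows "cyc_class G a l p (r + 1) = (\<lambda>x. a [^] x) ` C (int r)"
proof -
  have "cyc_class G a l p (r + 1) = (\<lambda>j. a [^] (int l ^ (3 * j + r))) ` {..<f}"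
    unfolding cyc_class_def f_def by (auto simp flip: int_pow_int)
  also have "\<dots> = (\<lambda>x. a [^] x) ` C (int r)"
  proof (intro equalityI subsetI)
    fix g assume "g \<in> (\<lambda>j. a [^] (int l ^ (3 * j + r))) ` {..<f}"
    then show "g \<in> (\<lambda>x. a [^] x) ` C (int r)"
      using mem_C_iff_pow[OF assms] by (auto intro: cong_refl)
  next
    fix g assume "g \<in> (\<lambda>x. a [^] x) ` C (int r)"
    then obtain x j where "g = a [^] x" "j < f" "[x = int l ^ (3 * j + r)] (mod int p)"
      using mem_C_iff_pow[OF assms] by auto
    then show "g \<in> (\<lambda>j. a [^] (int l ^ (3 * j + r))) ` {..<f}"
      by (auto simp: int_pow_generator_eq_iff)
  qed
  finally show ?thesis .
qed

lemma cyc_count_eq_reps: "cyc_count G a l p 1 1 (a [^] w) = reps w 0 0"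
proof -
  have X: "cyc_class G a l p 1 = (\<lambda>x. a [^] x) ` C 0" using cyc_class_eq_image[of 0] by simp
  let ?h = "\<lambda>x. (a [^] x, a [^] (w - x))"
  have "inj_on ?h (rep_set w 0 0)"
    by (rule inj_onI) (auto simp: rep_set_def int_pow_generator_eq_iff cong_def)
  moreover have "?h ` rep_set w 0 0
      = {(g, h). g \<in> cyc_class G a l p 1 \<and> h \<in> cyc_class G a l p 1 \<and> g \<otimes> h = a [^] w}"
  proof (intro equalityI subsetI)
    fix gh assume "gh \<in> ?h ` rep_set w 0 0"
    then show "gh \<in> {(g, h). g \<in> cyc_class G a l p 1 \<and> h \<in> cyc_class G a l p 1 \<and> g \<otimes> h = a [^] w}"
      unfolding X rep_set_def by (auto simp flip: int_pow_mult[OF generator])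
  next
    fix gh assume "gh \<in> {(g, h). g \<in> cyc_class G a l p 1 \<and> h \<in> cyc_class G a l p 1 \<and> g \<otimes> h = a [^] w}"
    then obtain x y where gh: "gh = (a [^] x, a [^] y)" "x \<in> C 0" "y \<in> C 0" "a [^] (x + y) = a [^] w"
      unfolding X by (auto simp: int_pow_mult[OF generator])
    define x' where "x' = x mod int p"
    have "[x' = x] (mod int p)" unfolding x'_def by (simp add: cong_def)
    moreover from gh(4) have "[w - x = y] (mod int p)"
      by (simp add: int_pow_generator_eq_iff cong_iff_dvd_diff dvd_diff_commute algebra_simps)
    ultimately have "[w - x' = y] (mod int p)"
      by (metis cong_diff cong_refl cong_sym cong_trans)
    moreover have "x' \<in> C 0" using gh(2) \<open>[x' = x] (mod int p)\<close> by (blast intro: C_cong cong_sym)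
    moreover have "x' \<in> {0..<int p}" unfolding x'_def using p_gt_1 by simp
    ultimately have "x' \<in> rep_set w 0 0" "gh = ?h x'"
      using gh(1,3) \<open>[x' = x] (mod int p)\<close>
      by (auto simp: rep_set_def int_pow_generator_eq_iff intro: C_cong cong_sym)
    then show "gh \<in> ?h ` rep_set w 0 0" by blast
  qed
  ultimately show ?thesis unfolding cyc_count_def reps_def by (metis card_image)
qed

lemma cyc_count_eq_cyc:
  assumes "z \<in> cyc_class G a l p i" and "i \<in> {1, 2, 3}"
  shows "cyc_count G a l p 1 1 z = cyc ((1 - int i) mod 3) ((1 - int i) mod 3)"
proof -
  have "i - 1 < 3" "i = (i - 1) + 1" using assms(2) by auto
  with assms(1) cyc_class_eq_image obtain x where "x \<in> C (int (i - 1))" "z = a [^] x" by (metis imageE)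
  moreover have "0 - int (i - 1) = 1 - int i" using assms(2) by auto
  ultimately show ?thesis using cyc_count_eq_reps[of x] reps_eq_cyc[of x "int (i - 1)" 0 0] by simp
qed

end

theorem lemma7p3:
  fixes G (structure) and a :: 'g and p l i :: nat and z1 z2 z3 :: 'g
  assumes "prime p" and "p mod 3 = 1"
    and "group G" and "a \<in> carrier G"
    and "carrier G = {a [^] (n::nat) | n. True}" and "card (carrier G) = p"
    and "residue_primroot p l"
    and "i \<in> {1, 2}"
    and "z1 \<in> cyc_class G a l p 1" and "z2 \<in> cyc_class G a l p 2" and "z3 \<in> cyc_class G a l p 3"
  shows "card {cyc_count G a l p 1 1 z1 + 2 * (i - 1), cyc_count G a l p 1 1 z2, cyc_count G a l p 1 1 z3} \<in> {2, 3}
       \<and> (card {cyc_count G a l p 1 1 z1 + 2 * (i - 1), cyc_count G a l p 1 1 z2, cyc_count G a l p 1 1 z3} = 2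
            \<longleftrightarrow> (\<exists>t::int. int p = t ^ 2 + 3 * int i ^ 2))"
proof -
  interpret cubic_cyclotomy_group p l G a
    using assms(1-7) by (simp add: cubic_cyclotomy_group_def cubic_cyclotomy_def cubic_cyclotomy_group_axioms_def)
  have counts: "cyc_count G a l p 1 1 z1 = cyc 0 0" "cyc_count G a l p 1 1 z2 = cyc 2 2"
    "cyc_count G a l p 1 1 z3 = cyc 1 1"
    using cyc_count_eq_cyc[OF assms(9)] cyc_count_eq_cyc[OF assms(10)] cyc_count_eq_cyc[OF assms(11)]
    by simp_all
  show ?thesis
    unfolding counts by (rule card_shifted_triple[OF prime_p cyc_diagonal_sum cyc_norm_form assms(8)])
qed

end
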